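(* For every integer $n\geq 2$, the operator $W_n^{*}$ on $H^2$ is Devaney chaotic.
   Context: $H^2$ denotes the Hardy space of analytic functions $f(z)=\sum_{k\ge0}\hat f(k)z^k$ on the open unit disk with $\sum_{k}|\hat f(k)|^2<\infty$. For $n\in\mathbb{N}$, $W_n$ is the bounded operator on $H^2$ given by $W_nf(z)=(1+z+\cdots+z^{n-1})f(z^n)$, and $W_n^{*}$ is its adjoint. An operator $T$ on a separable Banach space $Y$ is Devaney chaotic if it is hypercyclic (some vector has dense orbit) and its set of periodic points (vectors $f$ with $T^kf=f$ for some $k\in\mathbb{N}$) is dense in $Y$. *)

theory Defs
  imports "HOL-Analysis.Analysis"
begin

text \<open>Elements of H^2 are represented as functions complex => complex that are
holomorphic on the open unit disk, with square-summable Taylor coefficients at 0;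
as a canonical representative they are taken to vanish outside the disk.\<close>

definition h2coeff :: "(complex \<Rightarrow> complex) \<Rightarrow> nat \<Rightarrow> complex" where
  "h2coeff f k = (deriv ^^ k) f 0 / of_nat (fact k)"

definition H2 :: "(complex \<Rightarrow> complex) set" where
  "H2 = {f. f holomorphic_on ball 0 1 \<and> (\<forall>z. z \<notin> ball 0 1 \<longrightarrow> f z = 0)
            \<and> summable (\<lambda>k. (norm (h2coeff f k))\<^sup>2)}"

definition h2inner :: "(complex \<Rightarrow> complex) \<Rightarrow> (complex \<Rightarrow> complex) \<Rightarrow> complex" where
  "h2inner f g = (\<Sum>k. h2coeff f k * cnj (h2coeff g k))"

definition h2dist :: "(complex \<Rightarrow> complex) \<Rightarrow> (complex \<Rightarrow> complex) \<Rightarrow> real" where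
  "h2dist f g = sqrt (\<Sum>k. (norm (h2coeff f k - h2coeff g k))\<^sup>2)"

definition W :: "nat \<Rightarrow> (complex \<Rightarrow> complex) \<Rightarrow> (complex \<Rightarrow> complex)" where
  "W n f = (\<lambda>z. if z \<in> ball 0 1 then (\<Sum>j<n. z ^ j) * f (z ^ n) else 0)"

definition W_adj :: "nat \<Rightarrow> (complex \<Rightarrow> complex) \<Rightarrow> (complex \<Rightarrow> complex)" where
  "W_adj n = (THE T. (\<forall>g. T g \<in> H2)
                   \<and> (\<forall>g. g \<notin> H2 \<longrightarrow> T g = (\<lambda>z. 0))
                   \<and> (\<forall>f\<in>H2. \<forall>g\<in>H2. h2inner (W n f) g = h2inner f (T g)))"

definition h2_dense :: "(complex \<Rightarrow> complex) set \<Rightarrow> bool" where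
  "h2_dense S \<longleftrightarrow> S \<subseteq> H2 \<and> (\<forall>g\<in>H2. \<forall>e>0. \<exists>f\<in>S. h2dist f g < e)"

definition h2_hypercyclic :: "((complex \<Rightarrow> complex) \<Rightarrow> (complex \<Rightarrow> complex)) \<Rightarrow> bool" where
  "h2_hypercyclic T \<longleftrightarrow> (\<exists>f\<in>H2. h2_dense {(T ^^ k) f | k. True})"

definition h2_periodic_points :: "((complex \<Rightarrow> complex) \<Rightarrow> (complex \<Rightarrow> complex)) \<Rightarrow> (complex \<Rightarrow> complex) set" where
  "h2_periodic_points T = {f \<in> H2. \<exists>k\<ge>1. (T ^^ k) f = f}"

definition h2_devaney_chaotic :: "((complex \<Rightarrow> complex) \<Rightarrow> (complex \<Rightarrow> complex)) \<Rightarrow> bool" where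
  "h2_devaney_chaotic T \<longleftrightarrow> h2_hypercyclic T \<and> h2_dense (h2_periodic_points T)"

end

theory Submission
  imports Defs "HOL-Complex_Analysis.Cauchy_Integral_Formula"
begin

(*
  Taylor coefficients identify H^2 with l^2, and W_n^* becomes the block-sum operator B_n, where
  (B_N c)_k = c_(kN) + ... + c_(kN+N-1); its powers are B_n^m = B_(n^m).
  Spreading y over the blocks of length N, i.e. putting y_q / L at L positions of the q-th block,
  gives a B_N-preimage of y of norm |y| / sqrt L, while B_N annihilates every finitely supported
  sequence with entry sum zero once N exceeds its support. Adding up spread copies of an
  enumeration of a countable dense set of such zero-sum sequences, at rapidly increasing block
  lengths, yields a vector whose B_n-orbit comes close to each of them.
  Spreading a sequence into itself gives periodic points: x_(kN+j) = x_k / N for k >= 1 is fixed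
  by B_N as soon as y_1 + ... + y_(N-1) = 0, and it is close to y when N is large.
*)

section \<open>Square-summable sequences\<close>

definition square_summable :: "(nat \<Rightarrow> complex) \<Rightarrow> bool" where
  "square_summable x \<longleftrightarrow> summable (\<lambda>k. (cmod (x k))\<^sup>2)"

definition l2_norm :: "(nat \<Rightarrow> complex) \<Rightarrow> real" where
  "l2_norm x = sqrt (\<Sum>k. (cmod (x k))\<^sup>2)"

definition l2_dist :: "(nat \<Rightarrow> complex) \<Rightarrow> (nat \<Rightarrow> complex) \<Rightarrow> real" where
  "l2_dist x y = l2_norm (\<lambda>k. x k - y k)"

lemma l2_norm_square:
  assumes "square_summable x"
  shows "(l2_norm x)\<^sup>2 = (\<Sum>k. (cmod (x k))\<^sup>2)"
proof -
  have "0 \<le> (\<Sum>k. (cmod (x k))\<^sup>2)"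
    using assms unfolding square_summable_def by (rule suminf_nonneg) simp
  then show ?thesis
    unfolding l2_norm_def by simp
qed

lemma l2_norm_nonneg: "square_summable x \<Longrightarrow> 0 \<le> l2_norm x"
  unfolding l2_norm_def square_summable_def by (simp add: suminf_nonneg)

lemma sum_le_l2_norm_square:
  assumes "square_summable x"
  shows "(\<Sum>k<K. (cmod (x k))\<^sup>2) \<le> (l2_norm x)\<^sup>2"
  using assms unfolding l2_norm_square[OF assms] square_summable_def
  by (intro sum_le_suminf) auto

lemma L2_set_le_l2_norm:
  assumes "square_summable x"
  shows "L2_set (\<lambda>k. cmod (x k)) {..<K} \<le> l2_norm x"
  unfolding L2_set_def
  by (rule real_le_lsqrt[OF l2_norm_nonneg[OF assms] sum_le_l2_norm_square[OF assms]])

lemma square_summable_boundI: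
  assumes "\<And>K. (\<Sum>k<K. (cmod (x k))\<^sup>2) \<le> B"
  shows "square_summable x" and "(l2_norm x)\<^sup>2 \<le> B"
proof -
  show x: "square_summable x"
    unfolding square_summable_def
    by (rule bounded_imp_summable[of _ B]) (simp, metis assms lessThan_Suc_atMost)
  show "(l2_norm x)\<^sup>2 \<le> B"
    unfolding l2_norm_square[OF x] using x assms
    unfolding square_summable_def by (rule suminf_le_const)
qed

lemma square_summable_L2_boundI:
  assumes "\<And>K. L2_set (\<lambda>k. cmod (x k)) {..<K} \<le> B"
  shows "square_summable x" and "l2_norm x \<le> B"
proof -
  have B: "0 \<le> B"
    using assms[of 0] by simp
  have "(\<Sum>k<K. (cmod (x k))\<^sup>2) \<le> B\<^sup>2" for K
    using assms[of K] unfolding L2_set_def by (rule sqrt_le_D)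
  then show x: "square_summable x" and "l2_norm x \<le> B"
    using square_summable_boundI[of x "B\<^sup>2"] l2_norm_nonneg B
    by (auto intro: power2_le_imp_le)
qed

lemma l2_norm_add:
  assumes "square_summable x" "square_summable y"
  shows "square_summable (\<lambda>k. x k + y k)" and "l2_norm (\<lambda>k. x k + y k) \<le> l2_norm x + l2_norm y"
proof -
  have "L2_set (\<lambda>k. cmod (x k + y k)) {..<K} \<le> l2_norm x + l2_norm y" for K
  proof -
    have "L2_set (\<lambda>k. cmod (x k + y k)) {..<K} \<le> L2_set (\<lambda>k. cmod (x k) + cmod (y k)) {..<K}"
      by (rule L2_set_mono) (auto simp: norm_triangle_ineq)
    also have "\<dots> \<le> L2_set (\<lambda>k. cmod (x k)) {..<K} + L2_set (\<lambda>k. cmod (y k)) {..<K}"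
      by (rule L2_set_triangle_ineq)
    also have "\<dots> \<le> l2_norm x + l2_norm y"
      using assms by (intro add_mono L2_set_le_l2_norm)
    finally show ?thesis .
  qed
  then show "square_summable (\<lambda>k. x k + y k)" "l2_norm (\<lambda>k. x k + y k) \<le> l2_norm x + l2_norm y"
    by (rule square_summable_L2_boundI)+
qed

lemma square_summable_diff:
  assumes "square_summable x" "square_summable y"
  shows "square_summable (\<lambda>k. x k - y k)"
  using l2_norm_add(1)[OF assms(1), of "\<lambda>k. - y k"] assms(2)
  by (simp add: square_summable_def)

lemma l2_dist_triangle:
  assumes "square_summable x" "square_summable y" "square_summable z"
  shows "l2_dist x z \<le> l2_dist x y + l2_dist y z"
  using l2_norm_add(2)[OF square_summable_diff[OF assms(1,2)] square_summable_diff[OF assms(2,3)]]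
  by (simp add: l2_dist_def)

lemma square_summable_finite_support:
  assumes "\<And>k. M \<le> k \<Longrightarrow> x k = 0"
  shows "square_summable x" and "(l2_norm x)\<^sup>2 = (\<Sum>k<M. (cmod (x k))\<^sup>2)"
proof -
  show x: "square_summable x"
    unfolding square_summable_def by (rule summable_finite[of "{..<M}"]) (use assms in auto)
  show "(l2_norm x)\<^sup>2 = (\<Sum>k<M. (cmod (x k))\<^sup>2)"
    unfolding l2_norm_square[OF x] by (rule suminf_finite) (use assms in auto)
qed

lemma norm_le_l2_norm:
  assumes "square_summable x"
  shows "cmod (x k) \<le> l2_norm x"
proof -
  have "cmod (x k) \<le> L2_set (\<lambda>k. cmod (x k)) {..<Suc k}"
    by (rule member_le_L2_set) auto
  also have "\<dots> \<le> l2_norm x"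
    by (rule L2_set_le_l2_norm[OF assms])
  finally show ?thesis .
qed

lemma L2_set_sum_le:
  fixes z :: "'b \<Rightarrow> 'c \<Rightarrow> 'a::real_normed_vector"
  assumes "finite J"
  shows "L2_set (\<lambda>i. norm (\<Sum>j\<in>J. z j i)) A \<le> (\<Sum>j\<in>J. L2_set (\<lambda>i. norm (z j i)) A)"
  using assms
proof (induction J rule: finite_induct)
  case empty
  then show ?case
    by (simp add: L2_set_0')
next
  case (insert a J)
  have "L2_set (\<lambda>i. norm (\<Sum>j\<in>insert a J. z j i)) A
      \<le> L2_set (\<lambda>i. norm (z a i) + norm (\<Sum>j\<in>J. z j i)) A"
    using insert(1,2) by (intro L2_set_mono) (simp_all add: norm_triangle_ineq)
  also have "\<dots> \<le> L2_set (\<lambda>i. norm (z a i)) A + L2_set (\<lambda>i. norm (\<Sum>j\<in>J. z j i)) A"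
    by (rule L2_set_triangle_ineq)
  also have "\<dots> \<le> (\<Sum>j\<in>insert a J. L2_set (\<lambda>i. norm (z j i)) A)"
    using insert by simp
  finally show ?case .
qed

lemma truncation_approx:
  assumes x: "square_summable x" and e: "0 < e"
  shows "\<forall>\<^sub>F M in sequentially. l2_dist (\<lambda>k. if k < M then x k else 0) x < e"
proof -
  define f where "f = (\<lambda>k. (cmod (x k))\<^sup>2)"
  have f: "summable f"
    using x by (simp add: square_summable_def f_def)
  obtain N where N: "\<And>M. N \<le> M \<Longrightarrow> norm (\<Sum>i. f (i + M)) < e\<^sup>2"
    using suminf_exist_split[OF _ f, of "e\<^sup>2"] e by auto
  show ?thesis
    unfolding eventually_sequentially
  proof (intro exI allI impI)
    fix M
    assume "N \<le> M"
    define d where "d k = (if k < M then x k else 0) - x k" for k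
    have d: "(cmod (d k))\<^sup>2 = (if k < M then 0 else f k)" for k
      by (simp add: d_def f_def)
    have "summable (\<lambda>k. (cmod (d k))\<^sup>2)"
      unfolding d by (rule summable_comparison_test'[OF f]) (simp add: f_def)
    then have "(\<Sum>k. (cmod (d k))\<^sup>2) = (\<Sum>i. f (i + M))"
      by (subst suminf_split_initial_segment[of _ M]) (simp_all add: d)
    then have "l2_dist (\<lambda>k. if k < M then x k else 0) x = sqrt (\<Sum>i. f (i + M))"
      by (simp add: l2_dist_def l2_norm_def d_def)
    also have "\<dots> \<le> sqrt (norm (\<Sum>i. f (i + M)))"
      by simp
    also have "\<dots> < sqrt (e\<^sup>2)"
      using N[OF \<open>N \<le> M\<close>] by (simp only: real_sqrt_less_iff)
    finally show "l2_dist (\<lambda>k. if k < M then x k else 0) x < e"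
      using e by auto
  qed
qed

section \<open>Hardy space functions and their Taylor coefficients\<close>

definition h2_of_coeffs :: "(nat \<Rightarrow> complex) \<Rightarrow> complex \<Rightarrow> complex" where
  "h2_of_coeffs a = (\<lambda>z. if z \<in> ball 0 1 then (\<Sum>k. a k * z ^ k) else 0)"

lemma h2_of_coeffs_bounded:
  assumes bound: "\<And>k. cmod (a k) \<le> C"
  shows "h2_of_coeffs a holomorphic_on ball 0 1" and "h2coeff (h2_of_coeffs a) = a"
proof -
  define F where "F = Abs_fps a"
  have radius: "1 \<le> fps_conv_radius F"
    unfolding fps_conv_radius_def
  proof (rule conv_radius_geI_ex')
    fix r :: real
    assume r: "0 < r" "ereal r < 1"
    show "summable (\<lambda>k. fps_nth F k * of_real r ^ k)"
    proof (rule summable_comparison_test')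
      show "summable (\<lambda>k. C * r ^ k)"
        using r by (intro summable_mult summable_geometric) auto
      show "norm (fps_nth F k * of_real r ^ k) \<le> C * r ^ k" for k
        using r bound by (simp add: F_def norm_mult norm_power mult_right_mono)
    qed
  qed
  have ball_sub: "ball (0::complex) 1 \<subseteq> eball 0 (fps_conv_radius F)"
  proof
    fix z :: complex
    assume "z \<in> ball 0 1"
    then have "ereal (norm z) < 1"
      by simp
    then have "ereal (norm z) < fps_conv_radius F"
      using radius by (rule less_le_trans)
    then show "z \<in> eball 0 (fps_conv_radius F)"
      by simp
  qed
  have eval: "h2_of_coeffs a z = eval_fps F z" if "z \<in> ball 0 1" for z
    using that by (simp add: h2_of_coeffs_def eval_fps_def F_def)
  show "h2_of_coeffs a holomorphic_on ball 0 1"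
    using holomorphic_on_eval_fps[OF ball_sub] by (rule holomorphic_transform) (simp add: eval)
  have "h2_of_coeffs a has_fps_expansion F"
    unfolding has_fps_expansion_def
  proof
    show "0 < fps_conv_radius F"
      using radius by (rule less_le_trans[rotated]) simp
    have "eventually (\<lambda>z. z \<in> ball (0::complex) 1) (nhds 0)"
      by (intro eventually_nhds_in_open) auto
    then show "\<forall>\<^sub>F z in nhds 0. eval_fps F z = h2_of_coeffs a z"
      by eventually_elim (simp add: eval)
  qed
  from fps_nth_fps_expansion[OF this] show "h2coeff (h2_of_coeffs a) = a"
    by (simp add: fun_eq_iff h2coeff_def F_def)
qed

lemma h2_of_coeffs_in_H2:
  assumes "square_summable a"
  shows "h2_of_coeffs a \<in> H2" and "h2coeff (h2_of_coeffs a) = a"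
  using h2_of_coeffs_bounded[OF norm_le_l2_norm[OF assms]] assms
  by (auto simp: H2_def h2_of_coeffs_def square_summable_def)

lemma square_summable_h2coeff: "f \<in> H2 \<Longrightarrow> square_summable (h2coeff f)"
  by (simp add: H2_def square_summable_def)

lemma H2_sums:
  assumes "f \<in> H2" "z \<in> ball 0 1"
  shows "(\<lambda>k. h2coeff f k * z ^ k) sums f z"
  using holomorphic_power_series[of f 0 1 z] assms by (simp add: H2_def h2coeff_def)

lemma h2_of_coeffs_h2coeff:
  assumes "f \<in> H2"
  shows "h2_of_coeffs (h2coeff f) = f"
  using H2_sums[OF assms] assms by (auto simp: fun_eq_iff h2_of_coeffs_def H2_def sums_iff)

lemma h2dist_eq_l2_dist: "h2dist f g = l2_dist (h2coeff f) (h2coeff g)"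
  by (simp add: h2dist_def l2_dist_def l2_norm_def)

lemma h2dist_h2_of_coeffs:
  "square_summable a \<Longrightarrow> h2dist (h2_of_coeffs a) g = l2_dist a (h2coeff g)"
  by (simp add: h2dist_eq_l2_dist h2_of_coeffs_in_H2)

section \<open>Block sums and the adjoint of W_n\<close>

definition block_sum :: "nat \<Rightarrow> (nat \<Rightarrow> 'a::comm_monoid_add) \<Rightarrow> nat \<Rightarrow> 'a" where
  "block_sum N c k = sum c {k * N..<k * N + N}"

lemma sum_atLeastLessThan_add:
  fixes f :: "nat \<Rightarrow> 'a::comm_monoid_add"
  shows "sum f {m..<m + n} = (\<Sum>i<n. f (m + i))"
  using sum.shift_bounds_nat_ivl[of f 0 m n] by (simp add: atLeast0LessThan add.commute)

lemma block_sum_eq: "block_sum N c k = (\<Sum>i<N. c (k * N + i))"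
  unfolding block_sum_def by (rule sum_atLeastLessThan_add)

lemma block_sum_1 [simp]: "block_sum 1 c = c"
  by (simp add: fun_eq_iff block_sum_def)

lemma block_sum_block_sum:
  shows "block_sum b (block_sum a c) = block_sum (a * b) c"
proof
  fix k
  define c' where "c' i = c (k * (a * b) + i)" for i
  have "block_sum b (block_sum a c) k = (\<Sum>t<b. \<Sum>i<a. c' (t * a + i))"
    by (simp add: block_sum_eq c'_def algebra_simps)
  also have "\<dots> = (\<Sum>t<b. sum c' {t * a..<t * a + a})"
    by (simp add: sum_atLeastLessThan_add)
  also have "\<dots> = sum c' {..<b * a}"
    by (rule sum.nat_group)
  also have "\<dots> = block_sum (a * b) c k"
    by (simp add: block_sum_eq c'_def mult.commute)
  finally show "block_sum b (block_sum a c) k = block_sum (a * b) c k" .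
qed

lemma block_sum_add: "block_sum N (\<lambda>i. x i + y i) = (\<lambda>k. block_sum N x k + block_sum N y k)"
  by (simp add: fun_eq_iff block_sum_def sum.distrib)

lemma block_sum_sum: "block_sum N (\<lambda>i. \<Sum>j\<in>J. z j i) k = (\<Sum>j\<in>J. block_sum N (z j) k)"
  unfolding block_sum_def by (rule sum.swap)

lemma block_sum_eq_0:
  assumes "\<And>i. M \<le> i \<Longrightarrow> y i = 0" "(\<Sum>i<M. y i) = 0" "M \<le> P"
  shows "block_sum P y q = 0"
proof (cases "q = 0")
  case True
  have "(\<Sum>i<P. y i) = (\<Sum>i<M. y i)"
    using assms(1,3) by (intro sum.mono_neutral_right) auto
  then show ?thesis
    using True assms(2) by (simp add: block_sum_eq)
next
  case False
  then have "P \<le> q * P"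
    by simp
  then have "y (q * P + i) = 0" for i
    by (intro assms(1)) (use assms(3) in linarith)
  then show ?thesis
    by (simp add: block_sum_eq)
qed

lemma block_sum_l2_norm:
  assumes c: "square_summable c"
  shows "square_summable (block_sum N c)" and "l2_norm (block_sum N c) \<le> sqrt N * l2_norm c"
proof -
  have bound: "(\<Sum>k<K. (cmod (block_sum N c k))\<^sup>2) \<le> N * (l2_norm c)\<^sup>2" for K
  proof -
    have "(cmod (block_sum N c k))\<^sup>2 \<le> N * (\<Sum>i\<in>{k * N..<k * N + N}. (cmod (c i))\<^sup>2)" for k
    proof -
      have "cmod (block_sum N c k) \<le> (\<Sum>i\<in>{k * N..<k * N + N}. cmod (c i))"
        unfolding block_sum_def by (rule norm_sum)
      then have "(cmod (block_sum N c k))\<^sup>2 \<le> (\<Sum>i\<in>{k * N..<k * N + N}. cmod (c i))\<^sup>2"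
        by (rule power_mono) simp
      also have "\<dots> \<le> (\<Sum>i\<in>{k * N..<k * N + N}. (cmod (c i))\<^sup>2) * card {k * N..<k * N + N}"
        by (rule sum_squared_le_sum_of_squares)
      finally show ?thesis
        by (simp add: mult.commute)
    qed
    then have "(\<Sum>k<K. (cmod (block_sum N c k))\<^sup>2) \<le> (\<Sum>k<K. N * (\<Sum>i\<in>{k * N..<k * N + N}. (cmod (c i))\<^sup>2))"
      by (rule sum_mono)
    also have "\<dots> = N * (\<Sum>i<K * N. (cmod (c i))\<^sup>2)"
      by (simp add: sum_distrib_left[symmetric] sum.nat_group)
    also have "\<dots> \<le> N * (l2_norm c)\<^sup>2"
      using sum_le_l2_norm_square[OF c] by (simp add: mult_left_mono)
    finally show ?thesis .
  qed
  then show "square_summable (block_sum N c)"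
    by (rule square_summable_boundI)
  have "(l2_norm (block_sum N c))\<^sup>2 \<le> N * (l2_norm c)\<^sup>2"
    using bound by (rule square_summable_boundI)
  then have "l2_norm (block_sum N c) \<le> sqrt (N * (l2_norm c)\<^sup>2)"
    by (rule real_le_rsqrt)
  then show "l2_norm (block_sum N c) \<le> sqrt N * l2_norm c"
    using l2_norm_nonneg[OF c] by (simp add: real_sqrt_mult)
qed

lemma square_summable_dilate:
  assumes a: "square_summable a" and n: "0 < n"
  shows "square_summable (\<lambda>m. a (m div n))"
proof (rule square_summable_boundI)
  fix K
  have "(\<Sum>m<K. (cmod (a (m div n)))\<^sup>2) \<le> (\<Sum>m<K * n. (cmod (a (m div n)))\<^sup>2)"
    using n by (intro sum_mono2) auto
  also have "\<dots> = (\<Sum>k<K. \<Sum>i<n. (cmod (a ((k * n + i) div n)))\<^sup>2)"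
    by (simp flip: sum.nat_group add: sum_atLeastLessThan_add)
  also have "\<dots> = n * (\<Sum>k<K. (cmod (a k))\<^sup>2)"
    using n by (simp add: sum_distrib_left)
  also have "\<dots> \<le> n * (l2_norm a)\<^sup>2"
    using sum_le_l2_norm_square[OF a] by (simp add: mult_left_mono)
  finally show "(\<Sum>m<K. (cmod (a (m div n)))\<^sup>2) \<le> n * (l2_norm a)\<^sup>2" .
qed

lemma W_eq_h2_of_coeffs:
  assumes f: "f \<in> H2" and n: "0 < n"
  shows "W n f = h2_of_coeffs (\<lambda>m. h2coeff f (m div n))"
proof
  fix z
  define a where "a = h2coeff f"
  show "W n f z = h2_of_coeffs (\<lambda>m. h2coeff f (m div n)) z"
  proof (cases "z \<in> ball 0 1")
    case False
    then show ?thesis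
      by (simp add: W_def h2_of_coeffs_def)
  next
    case True
    then have z: "norm z < 1"
      by simp
    have zn: "z ^ n \<in> ball 0 1"
      using z n by (simp add: norm_power power_less_one_iff)
    have "summable (\<lambda>m. a (m div n) * z ^ m)"
    proof (rule summable_comparison_test')
      show "summable (\<lambda>m. l2_norm a * norm z ^ m)"
        using z by (intro summable_mult summable_geometric) auto
      show "norm (a (m div n) * z ^ m) \<le> l2_norm a * norm z ^ m" for m
        using norm_le_l2_norm[OF square_summable_h2coeff[OF f]]
        by (simp add: a_def norm_mult norm_power mult_right_mono)
    qed
    from sums_group[OF summable_sums[OF this] n]
    have "(\<lambda>k. \<Sum>i<n. a ((k * n + i) div n) * z ^ (k * n + i)) sums (\<Sum>m. a (m div n) * z ^ m)"
      by (simp add: sum_atLeastLessThan_add)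
    moreover have "(\<Sum>i<n. a ((k * n + i) div n) * z ^ (k * n + i)) = a k * (z ^ n) ^ k * (\<Sum>i<n. z ^ i)" for k
      using n by (simp add: sum_distrib_left sum_distrib_right power_add power_mult[symmetric] mult_ac)
    moreover have "(\<lambda>k. a k * (z ^ n) ^ k * (\<Sum>i<n. z ^ i)) sums (f (z ^ n) * (\<Sum>i<n. z ^ i))"
      using H2_sums[OF f zn] unfolding a_def by (rule sums_mult2)
    ultimately have "(\<Sum>m. a (m div n) * z ^ m) = f (z ^ n) * (\<Sum>i<n. z ^ i)"
      by (simp add: sums_unique2)
    then show ?thesis
      using True by (simp add: W_def h2_of_coeffs_def a_def mult.commute)
  qed
qed

lemma summable_mult_cnj:
  assumes "square_summable x" "square_summable y"
  shows "summable (\<lambda>k. x k * cnj (y k))"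
proof (rule summable_norm_cancel, rule summable_comparison_test')
  show "summable (\<lambda>k. ((cmod (x k))\<^sup>2 + (cmod (y k))\<^sup>2) / 2)"
    using assms unfolding square_summable_def by (intro summable_divide summable_add)
  show "norm (norm (x k * cnj (y k))) \<le> ((cmod (x k))\<^sup>2 + (cmod (y k))\<^sup>2) / 2" for k
    using sum_squares_bound[of "cmod (x k)" "cmod (y k)"] by (simp add: norm_mult)
qed

lemma h2inner_W:
  assumes f: "f \<in> H2" and g: "g \<in> H2" and n: "0 < n"
  shows "h2inner (W n f) g = h2inner f (h2_of_coeffs (block_sum n (h2coeff g)))"
proof -
  define a where "a = h2coeff f"
  define c where "c = h2coeff g"
  have a: "square_summable (\<lambda>m. a (m div n))" and c: "square_summable c"
    using square_summable_h2coeff[OF f] square_summable_h2coeff[OF g] n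
    by (simp_all add: a_def c_def square_summable_dilate)
  have "h2coeff (W n f) = (\<lambda>m. a (m div n))"
    using W_eq_h2_of_coeffs[OF f n] h2_of_coeffs_in_H2(2)[OF a] by (simp add: a_def)
  then have "(\<lambda>m. a (m div n) * cnj (c m)) sums h2inner (W n f) g"
    using summable_sums[OF summable_mult_cnj[OF a c]] by (simp add: h2inner_def c_def)
  from sums_group[OF this n]
  have "(\<lambda>k. \<Sum>i<n. a ((k * n + i) div n) * cnj (c (k * n + i))) sums h2inner (W n f) g"
    by (simp add: sum_atLeastLessThan_add)
  moreover have "(\<Sum>i<n. a ((k * n + i) div n) * cnj (c (k * n + i))) = a k * cnj (block_sum n c k)" for k
    using n by (simp add: block_sum_eq sum_distrib_left)
  moreover have "h2_of_coeffs (block_sum n c) \<in> H2" "h2coeff (h2_of_coeffs (block_sum n c)) = block_sum n c"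
    using h2_of_coeffs_in_H2 block_sum_l2_norm(1)[OF c] by blast+
  ultimately show ?thesis
    by (simp add: h2inner_def sums_iff a_def c_def)
qed

lemma h2inner_monomial:
  "h2inner (h2_of_coeffs (\<lambda>i. if i = k then 1 else 0)) h = cnj (h2coeff h k)"
proof -
  have "square_summable (\<lambda>i. if i = k then 1 else 0)"
    by (rule square_summable_finite_support[of "Suc k"]) simp
  moreover have "(\<lambda>i. (if i = k then 1 else 0) * cnj (h2coeff h i)) = (\<lambda>i. if i = k then cnj (h2coeff h i) else 0)"
    by auto
  ultimately show ?thesis
    using sums_single[of k "\<lambda>i. cnj (h2coeff h i)"]
    by (simp add: h2inner_def h2_of_coeffs_in_H2 sums_iff)
qed

lemma W_adj_eq:
  assumes n: "0 < n"
  shows "W_adj n = (\<lambda>g. if g \<in> H2 then h2_of_coeffs (block_sum n (h2coeff g)) else (\<lambda>z. 0))"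
    (is "_ = ?A")
proof -
  have "h2_of_coeffs (\<lambda>_. 0) = (\<lambda>z. 0)"
    by (simp add: h2_of_coeffs_def fun_eq_iff)
  then have "(\<lambda>z. 0) \<in> H2"
    using h2_of_coeffs_in_H2(1)[of "\<lambda>_. 0"] by (simp add: square_summable_def)
  then have A_H2: "?A g \<in> H2" for g
    using h2_of_coeffs_in_H2(1) block_sum_l2_norm(1)[OF square_summable_h2coeff] by auto
  show ?thesis
    unfolding W_adj_def
  proof (rule the_equality)
    show "(\<forall>g. ?A g \<in> H2) \<and> (\<forall>g. g \<notin> H2 \<longrightarrow> ?A g = (\<lambda>z. 0)) \<and>
        (\<forall>f\<in>H2. \<forall>g\<in>H2. h2inner (W n f) g = h2inner f (?A g))"
      using A_H2 h2inner_W[OF _ _ n] by auto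
  next
    fix T
    assume T: "(\<forall>g. T g \<in> H2) \<and> (\<forall>g. g \<notin> H2 \<longrightarrow> T g = (\<lambda>z. 0)) \<and>
        (\<forall>f\<in>H2. \<forall>g\<in>H2. h2inner (W n f) g = h2inner f (T g))"
    show "T = ?A"
    proof
      fix g
      show "T g = ?A g"
      proof (cases "g \<in> H2")
        case False
        then show ?thesis
          using T by simp
      next
        case g: True
        have "h2coeff (T g) k = h2coeff (?A g) k" for k
        proof -
          define e where "e = h2_of_coeffs (\<lambda>i. if i = k then 1 else 0)"
          have "e \<in> H2"
            unfolding e_def
            by (rule h2_of_coeffs_in_H2, rule square_summable_finite_support[of "Suc k"]) simp
          then have "h2inner e (T g) = h2inner e (?A g)"
            using T h2inner_W[OF _ g n] g by auto
          then show ?thesis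
            by (simp add: e_def h2inner_monomial)
        qed
        then have "h2coeff (T g) = h2coeff (?A g)"
          by (rule ext)
        then have "h2_of_coeffs (h2coeff (T g)) = h2_of_coeffs (h2coeff (?A g))"
          by (rule arg_cong)
        then show ?thesis
          using T by (simp only: h2_of_coeffs_h2coeff A_H2)
      qed
    qed
  qed
qed

lemma W_adj_power:
  assumes n: "0 < n" and g: "g \<in> H2"
  shows "(W_adj n ^^ m) g = h2_of_coeffs (block_sum (n ^ m) (h2coeff g))"
proof (induction m)
  case 0
  then show ?case
    unfolding power_0 block_sum_1 using h2_of_coeffs_h2coeff[OF g] by simp
next
  case (Suc m)
  have "square_summable (block_sum (n ^ m) (h2coeff g))"
    using block_sum_l2_norm(1)[OF square_summable_h2coeff[OF g]] by simp
  then show ?case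
    using Suc h2_of_coeffs_in_H2 by (simp add: W_adj_eq[OF n] block_sum_block_sum mult.commute)
qed

section \<open>Balanced sequences\<close>

definition spread_correction :: "nat \<Rightarrow> nat \<Rightarrow> nat \<Rightarrow> (nat \<Rightarrow> complex) \<Rightarrow> nat \<Rightarrow> complex" where
  "spread_correction a M Q t i =
     t i - (if M \<le> i \<and> i < M + Q then (\<Sum>j\<in>{a..<M}. t j) / of_nat Q else 0)"

lemma spread_correction_support:
  "(\<And>i. M \<le> i \<Longrightarrow> t i = 0) \<Longrightarrow> M + Q \<le> i \<Longrightarrow> spread_correction a M Q t i = 0"
  by (simp add: spread_correction_def)

lemma spread_correction_sum:
  assumes t: "\<And>i. M \<le> i \<Longrightarrow> t i = 0" and "a \<le> M" "0 < Q"
  shows "(\<Sum>i\<in>{a..<M + Q}. spread_correction a M Q t i) = 0"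
proof -
  have "(\<Sum>i\<in>{a..<M + Q}. spread_correction a M Q t i)
      = (\<Sum>i\<in>{a..<M}. spread_correction a M Q t i) + (\<Sum>i\<in>{M..<M + Q}. spread_correction a M Q t i)"
    using assms by (simp add: sum.atLeastLessThan_concat)
  also have "\<dots> = (\<Sum>j\<in>{a..<M}. t j) - (\<Sum>i\<in>{M..<M + Q}. (\<Sum>j\<in>{a..<M}. t j) / of_nat Q)"
    using t by (simp add: spread_correction_def sum_subtractf)
  also have "\<dots> = 0"
    using \<open>0 < Q\<close> by simp
  finally show ?thesis .
qed

lemma spread_correction_dist:
  assumes "0 < Q"
  shows "l2_dist (spread_correction a M Q t) t = cmod (\<Sum>j\<in>{a..<M}. t j) / sqrt Q"
proof -
  define s where "s = (\<Sum>j\<in>{a..<M}. t j)"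
  define d where "d = (\<lambda>i. spread_correction a M Q t i - t i)"
  have d: "d i = - (if M \<le> i \<and> i < M + Q then s / of_nat Q else 0)" for i
    by (simp add: d_def s_def spread_correction_def)
  have d_summable: "square_summable d"
    by (rule square_summable_finite_support(1)[of "M + Q"]) (simp add: d)
  have "(l2_norm d)\<^sup>2 = (\<Sum>i<M + Q. (cmod (d i))\<^sup>2)"
    by (rule square_summable_finite_support(2)) (simp add: d)
  also have "\<dots> = (\<Sum>i\<in>{M..<M + Q}. (cmod s / Q)\<^sup>2)"
    by (rule sum.mono_neutral_cong_right) (auto simp: d norm_divide)
  also have "\<dots> = (cmod s / sqrt Q)\<^sup>2"
    using assms by (simp add: power_divide power2_eq_square)
  finally show ?thesis
    using power2_eq_iff_nonneg[OF l2_norm_nonneg[OF d_summable]]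
    by (simp add: l2_dist_def s_def flip: d_def)
qed

(* Gaussian-rational entries make the balanced sequences a countable family,
   which the construction of a hypercyclic vector enumerates. *)
definition complex_of_rat_pair :: "rat \<times> rat \<Rightarrow> complex" where
  "complex_of_rat_pair q = Complex (of_rat (fst q)) (of_rat (snd q))"

definition rat_seq :: "(rat \<times> rat) list \<Rightarrow> nat \<Rightarrow> complex" where
  "rat_seq l i = (if i < length l then complex_of_rat_pair (l ! i) else 0)"

lemma complex_of_rat_pair_dense:
  assumes "0 < e"
  shows "\<exists>q. cmod (complex_of_rat_pair q - u) < e"
proof -
  obtain r1 where r1: "r1 \<in> \<rat>" "Re u - e / 2 < r1" "r1 < Re u + e / 2"
    using Rats_dense_in_real[of "Re u - e / 2" "Re u + e / 2"] assms by auto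
  obtain r2 where r2: "r2 \<in> \<rat>" "Im u - e / 2 < r2" "r2 < Im u + e / 2"
    using Rats_dense_in_real[of "Im u - e / 2" "Im u + e / 2"] assms by auto
  obtain q1 q2 where q: "r1 = of_rat q1" "r2 = of_rat q2"
    using r1(1) r2(1) Rats_cases by metis
  have "cmod (complex_of_rat_pair (q1, q2) - u) \<le> \<bar>r1 - Re u\<bar> + \<bar>r2 - Im u\<bar>"
    using cmod_le[of "complex_of_rat_pair (q1, q2) - u"] by (simp add: complex_of_rat_pair_def q)
  also have "\<dots> < e"
    using r1 r2 by (simp add: abs_less_iff)
  finally show ?thesis ..
qed

lemma rat_seq_approx:
  assumes u: "\<And>i. M \<le> i \<Longrightarrow> u i = 0" and d: "0 < d"
  shows "\<exists>l. length l = M \<and> l2_dist (rat_seq l) u < d"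
proof -
  define e where "e = d / sqrt (M + 1)"
  have "0 < e"
    using d by (simp add: e_def)
  then have "\<forall>i. \<exists>q. cmod (complex_of_rat_pair q - u i) < e"
    using complex_of_rat_pair_dense by blast
  then obtain q where q: "\<And>i. cmod (complex_of_rat_pair (q i) - u i) < e"
    by metis
  define l where "l = map q [0..<M]"
  have "(l2_dist (rat_seq l) u)\<^sup>2 = (\<Sum>i<M. (cmod (rat_seq l i - u i))\<^sup>2)"
    unfolding l2_dist_def by (rule square_summable_finite_support(2)) (simp add: u rat_seq_def l_def)
  also have "\<dots> \<le> (\<Sum>i<M. e\<^sup>2)"
    using q by (intro sum_mono power_mono) (auto simp: rat_seq_def l_def less_imp_le)
  also have "\<dots> < d\<^sup>2"
    using d by (simp add: e_def power_divide field_simps)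
  finally have "l2_dist (rat_seq l) u < d"
    using d by (auto intro: power_less_imp_less_base)
  moreover have "length l = M"
    by (simp add: l_def)
  ultimately show ?thesis
    by blast
qed

definition balanced_rat_seq :: "nat \<Rightarrow> (rat \<times> rat) list \<times> nat \<Rightarrow> nat \<Rightarrow> complex" where
  "balanced_rat_seq a \<pi> = spread_correction a (length (fst \<pi>)) (Suc (snd \<pi>)) (rat_seq (fst \<pi>))"

definition balanced_support :: "(rat \<times> rat) list \<times> nat \<Rightarrow> nat" where
  "balanced_support \<pi> = length (fst \<pi>) + Suc (snd \<pi>)"

lemma balanced_rat_seq_support: "balanced_support \<pi> \<le> i \<Longrightarrow> balanced_rat_seq a \<pi> i = 0"
  unfolding balanced_rat_seq_def balanced_support_def
  by (rule spread_correction_support) (simp_all add: rat_seq_def)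

lemma balanced_rat_seq_sum:
  "a \<le> length (fst \<pi>) \<Longrightarrow> (\<Sum>i\<in>{a..<balanced_support \<pi>}. balanced_rat_seq a \<pi> i) = 0"
  unfolding balanced_rat_seq_def balanced_support_def
  by (rule spread_correction_sum) (simp_all add: rat_seq_def)

lemma ex_div_sqrt_less:
  assumes "0 < d"
  shows "\<exists>Q. C / sqrt (Suc Q) < d"
proof -
  obtain Q :: nat where Q: "(C / d)\<^sup>2 < Q"
    using reals_Archimedean2 by blast
  have "C / d < sqrt (Suc Q)"
    using real_less_rsqrt[of "C / d" "Suc Q"] Q by simp
  then show ?thesis
    using assms by (auto simp: divide_less_eq mult.commute)
qed

lemma balanced_rat_seq_dense:
  assumes c: "square_summable c" and e: "0 < e"
  shows "\<exists>\<pi>. a \<le> length (fst \<pi>) \<and> l2_dist (balanced_rat_seq a \<pi>) c < e"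
proof -
  have "0 < e / 3"
    using e by simp
  from eventually_conj[OF eventually_ge_at_top[of a] truncation_approx[OF c this]]
  obtain M where "a \<le> M" and M: "l2_dist (\<lambda>i. if i < M then c i else 0) c < e / 3"
    unfolding eventually_sequentially by blast
  define t where "t = (\<lambda>i. if i < M then c i else 0)"
  have t: "\<And>i. M \<le> i \<Longrightarrow> t i = 0"
    by (simp add: t_def)
  obtain l where l: "length l = M" "l2_dist (rat_seq l) t < e / 3"
    using rat_seq_approx[of M t "e / 3"] t e by auto
  obtain Q where Q: "cmod (\<Sum>j\<in>{a..<M}. rat_seq l j) / sqrt (Suc Q) < e / 3"
    using ex_div_sqrt_less[where d = "e / 3"] e by auto
  define \<pi> where "\<pi> = (l, Q)"
  have "l2_dist (balanced_rat_seq a \<pi>) (rat_seq l) < e / 3"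
    using Q spread_correction_dist[of "Suc Q" a M "rat_seq l"] l(1)
    by (simp add: balanced_rat_seq_def \<pi>_def)
  moreover have "square_summable (balanced_rat_seq a \<pi>)"
    by (rule square_summable_finite_support(1)) (rule balanced_rat_seq_support)
  moreover have r: "square_summable (rat_seq l)"
    by (rule square_summable_finite_support(1)[of M]) (simp add: rat_seq_def l(1))
  ultimately have "l2_dist (balanced_rat_seq a \<pi>) c < e / 3 + l2_dist (rat_seq l) c"
    using l2_dist_triangle[OF _ r c, of "balanced_rat_seq a \<pi>"] by linarith
  moreover have "square_summable t"
    using t by (rule square_summable_finite_support)
  then have "l2_dist (rat_seq l) c < e / 3 + e / 3"
    using l2_dist_triangle[OF r _ c, of t] l(2) M
    unfolding t_def by linarith
  ultimately have "l2_dist (balanced_rat_seq a \<pi>) c < e"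
    by linarith
  then show ?thesis
    using \<open>a \<le> M\<close> l(1) by (intro exI[of _ \<pi>]) (simp add: \<pi>_def)
qed

section \<open>Periodic points\<close>

(* The guard N < 2 only serves termination. *)
function periodic_extension :: "nat \<Rightarrow> (nat \<Rightarrow> complex) \<Rightarrow> nat \<Rightarrow> complex" where
  "periodic_extension N y m =
     (if m < N \<or> N < 2 then y m else periodic_extension N y (m div N) / of_nat N)"
  by pat_completeness auto
termination
  by (relation "Wellfounded.measure (\<lambda>(N, y, m). m)") (auto intro: div_less_dividend)

declare periodic_extension.simps [simp del]

lemma periodic_extension_less: "m < N \<Longrightarrow> periodic_extension N y m = y m"
  by (simp add: periodic_extension.simps)

lemma periodic_extension_block:
  assumes "2 \<le> N" "j < N" "0 < k"
  shows "periodic_extension N y (k * N + j) = periodic_extension N y k / of_nat N"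
proof -
  have "N \<le> k * N + j"
    using assms by (simp add: trans_le_add1)
  then show ?thesis
    using assms by (subst periodic_extension.simps) simp
qed

lemma block_sum_periodic_extension:
  assumes N: "2 \<le> N" and y: "(\<Sum>i\<in>{1..<N}. y i) = 0"
  shows "block_sum N (periodic_extension N y) = periodic_extension N y"
proof
  fix k
  show "block_sum N (periodic_extension N y) k = periodic_extension N y k"
  proof (cases "k = 0")
    case True
    have "block_sum N (periodic_extension N y) 0 = y 0 + (\<Sum>i\<in>{1..<N}. y i)"
      using N by (simp add: block_sum_def periodic_extension_less sum.atLeast_Suc_lessThan)
    then show ?thesis
      using True y N by (simp add: periodic_extension_less)
  next
    case False
    then show ?thesis
      using N by (simp add: block_sum_eq periodic_extension_block)
  qed
qed

lemma sum_lessThan_power_Suc: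
  fixes f :: "nat \<Rightarrow> 'a::comm_monoid_add"
  shows "(\<Sum>m<N ^ Suc r. f m) = (\<Sum>k<N ^ r. \<Sum>j<N. f (k * N + j))"
proof -
  have "(\<Sum>m<N ^ Suc r. f m) = (\<Sum>m<N ^ r * N. f m)"
    by (simp only: power_Suc2)
  also have "\<dots> = (\<Sum>k<N ^ r. sum f {k * N..<k * N + N})"
    by (rule sum.nat_group[symmetric])
  finally show ?thesis
    by (simp add: sum_atLeastLessThan_add)
qed

context
  fixes N :: nat and y :: "nat \<Rightarrow> complex"
  assumes N: "2 \<le> N"
begin

lemma periodic_extension_block_norm:
  "(\<Sum>j<N. (cmod (periodic_extension N y (k * N + j)))\<^sup>2)
     = (if k = 0 then (\<Sum>j<N. (cmod (y j))\<^sup>2) else (cmod (periodic_extension N y k))\<^sup>2 / N)"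
  using N by (auto simp: periodic_extension_less periodic_extension_block norm_divide power_divide power2_eq_square)

lemma periodic_extension_partial_bound:
  "(\<Sum>m<N ^ r. (cmod (periodic_extension N y m))\<^sup>2) \<le> (\<Sum>j<N. (cmod (y j))\<^sup>2) * N / (real N - 1)"
proof (induction r)
  case 0
  let ?Y = "\<Sum>j<N. (cmod (y j))\<^sup>2"
  have "(cmod (y 0))\<^sup>2 \<le> ?Y"
    using N by (intro member_le_sum) auto
  also have "\<dots> \<le> ?Y * N / (real N - 1)"
    using N sum_nonneg[of "{..<N}" "\<lambda>j. (cmod (y j))\<^sup>2"] by (simp add: field_simps)
  finally show ?case
    using N by (simp add: periodic_extension_less)
next
  case (Suc r)
  let ?Y = "\<Sum>j<N. (cmod (y j))\<^sup>2"
  have "(\<Sum>m<N ^ Suc r. (cmod (periodic_extension N y m))\<^sup>2)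
      = (\<Sum>k<N ^ r. if k = 0 then ?Y else (cmod (periodic_extension N y k))\<^sup>2 / N)"
    by (simp only: sum_lessThan_power_Suc periodic_extension_block_norm)
  also have "\<dots> \<le> (\<Sum>k<N ^ r. (if k = 0 then ?Y else 0) + (cmod (periodic_extension N y k))\<^sup>2 / N)"
    by (rule sum_mono) auto
  also have "\<dots> = ?Y + (\<Sum>k<N ^ r. (cmod (periodic_extension N y k))\<^sup>2) / N"
    using N by (simp add: sum.distrib sum_divide_distrib)
  also have "\<dots> \<le> ?Y + (?Y * N / (real N - 1)) / N"
    using Suc.IH by (intro add_left_mono divide_right_mono) simp_all
  also have "\<dots> = ?Y * N / (real N - 1)"
    using N by (simp add: field_simps)
  finally show ?case .
qed

lemma periodic_extension_dist:
  assumes y: "\<And>i. N \<le> i \<Longrightarrow> y i = 0"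
  shows "square_summable (periodic_extension N y)"
    and "(l2_dist (periodic_extension N y) y)\<^sup>2 \<le> (\<Sum>j<N. (cmod (y j))\<^sup>2) / (real N - 1)"
proof -
  let ?x = "periodic_extension N y" and ?Y = "\<Sum>j<N. (cmod (y j))\<^sup>2"
  have K_le: "K \<le> N ^ K" for K
    using N power_gt_expt[of N K] by simp
  show "square_summable ?x"
  proof (rule square_summable_boundI)
    fix K
    have "(\<Sum>m<K. (cmod (?x m))\<^sup>2) \<le> (\<Sum>m<N ^ K. (cmod (?x m))\<^sup>2)"
      using K_le by (intro sum_mono2) auto
    also have "\<dots> \<le> ?Y * N / (real N - 1)"
      by (rule periodic_extension_partial_bound)
    finally show "(\<Sum>m<K. (cmod (?x m))\<^sup>2) \<le> ?Y * N / (real N - 1)" .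
  qed
  have "(\<Sum>m<K. (cmod (?x m - y m))\<^sup>2) \<le> ?Y / (real N - 1)" for K
  proof -
    have "(\<Sum>m<K. (cmod (?x m - y m))\<^sup>2) \<le> (\<Sum>m<N ^ Suc K. (cmod (?x m - y m))\<^sup>2)"
      using K_le[of "Suc K"] by (intro sum_mono2) auto
    also have "\<dots> = (\<Sum>k<N ^ K. \<Sum>j<N. (cmod (?x (k * N + j) - y (k * N + j)))\<^sup>2)"
      by (rule sum_lessThan_power_Suc)
    also have "\<dots> = (\<Sum>k<N ^ K. if k = 0 then 0 else (cmod (?x k))\<^sup>2 / N)"
    proof (rule sum.cong[OF refl])
      fix k
      have "y (k * N + j) = 0" if "k \<noteq> 0" for j
        using y that by (simp add: trans_le_add1)
      then show "(\<Sum>j<N. (cmod (?x (k * N + j) - y (k * N + j)))\<^sup>2) = (if k = 0 then 0 else (cmod (?x k))\<^sup>2 / N)"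
        using periodic_extension_block_norm[of k] by (simp add: periodic_extension_less)
    qed
    also have "\<dots> \<le> (\<Sum>k<N ^ K. (cmod (?x k))\<^sup>2) / N"
      unfolding sum_divide_distrib by (rule sum_mono) simp
    also have "\<dots> \<le> (?Y * N / (real N - 1)) / N"
      using periodic_extension_partial_bound[of K] by (rule divide_right_mono) simp
    also have "\<dots> = ?Y / (real N - 1)"
      using N by (simp add: field_simps)
    finally show ?thesis .
  qed
  then show "(l2_dist ?x y)\<^sup>2 \<le> ?Y / (real N - 1)"
    unfolding l2_dist_def by (rule square_summable_boundI(2))
qed

end

lemma periodic_extension_approx:
  assumes n: "2 \<le> n" and y: "\<And>i. M \<le> i \<Longrightarrow> y i = 0" "(\<Sum>i\<in>{1..<M}. y i) = 0"
    and d: "0 < d"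
  shows "\<exists>p>0. square_summable (periodic_extension (n ^ p) y) \<and>
    block_sum (n ^ p) (periodic_extension (n ^ p) y) = periodic_extension (n ^ p) y \<and>
    l2_dist (periodic_extension (n ^ p) y) y < d"
proof -
  define Y where "Y = (\<Sum>j<M. (cmod (y j))\<^sup>2)"
  define p where "p = M + 2 + nat \<lceil>Y / d\<^sup>2\<rceil>"
  define N where "N = n ^ p"
  have "p \<le> N"
    using n power_gt_expt[of n p] by (simp add: N_def)
  then have N: "2 \<le> N" "M \<le> N" "Y / d\<^sup>2 < real N - 1"
    using real_nat_ceiling_ge[of "Y / d\<^sup>2"] by (auto simp: p_def)
  have y_N: "\<And>i. N \<le> i \<Longrightarrow> y i = 0"
    using N(2) y(1) by simp
  have "(\<Sum>i\<in>{1..<N}. y i) = (\<Sum>i\<in>{1..<M}. y i)"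
    using N(2) y(1) by (intro sum.mono_neutral_right) auto
  then have fixed: "block_sum N (periodic_extension N y) = periodic_extension N y"
    using y(2) by (intro block_sum_periodic_extension[OF N(1)]) simp
  have "(\<Sum>j<N. (cmod (y j))\<^sup>2) = Y"
    unfolding Y_def using N(2) y(1) by (intro sum.mono_neutral_right) auto
  then have "(l2_dist (periodic_extension N y) y)\<^sup>2 \<le> Y / (real N - 1)"
    using periodic_extension_dist(2)[of N y] N(1) y_N by simp
  also have "\<dots> < d\<^sup>2"
    using N(1,3) d by (simp add: pos_divide_less_eq mult.commute)
  finally have "l2_dist (periodic_extension N y) y < d"
    by (rule power_less_imp_less_base) (use d in simp)
  moreover have "0 < p"
    by (simp add: p_def)
  ultimately show ?thesis
    using periodic_extension_dist(1)[of N y] N(1) y_N fixed by (auto simp: N_def)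
qed

lemma block_sum_periodic_approx:
  assumes n: "2 \<le> n" and c: "square_summable c" and e: "0 < e"
  shows "\<exists>x p. 0 < p \<and> square_summable x \<and> block_sum (n ^ p) x = x \<and> l2_dist x c < e"
proof -
  obtain \<pi> where \<pi>: "1 \<le> length (fst \<pi>)" "l2_dist (balanced_rat_seq 1 \<pi>) c < e / 2"
    using balanced_rat_seq_dense[OF c, where e = "e / 2" and a = 1] e by auto
  define y where "y = balanced_rat_seq 1 \<pi>"
  have y: "\<And>i. balanced_support \<pi> \<le> i \<Longrightarrow> y i = 0"
    by (simp add: y_def balanced_rat_seq_support)
  then have "square_summable y"
    by (rule square_summable_finite_support)
  obtain p where p: "0 < p" "square_summable (periodic_extension (n ^ p) y)"
    "block_sum (n ^ p) (periodic_extension (n ^ p) y) = periodic_extension (n ^ p) y"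
    "l2_dist (periodic_extension (n ^ p) y) y < e / 2"
    using periodic_extension_approx[of n "balanced_support \<pi>" y "e / 2"] n y e
      balanced_rat_seq_sum[OF \<pi>(1)] by (auto simp: y_def)
  have "l2_dist (periodic_extension (n ^ p) y) c < e"
    using l2_dist_triangle[OF p(2) \<open>square_summable y\<close> c] p(4) \<pi>(2) by (simp add: y_def)
  then show ?thesis
    using p by blast
qed

section \<open>A hypercyclic vector\<close>

lemma geometric_tail_le: "(\<Sum>j\<in>{k<..<K}. (1 / 2 :: real) ^ j) \<le> (1 / 2) ^ k"
proof -
  have "(\<Sum>j\<in>{k<..<K}. (1 / 2 :: real) ^ j) \<le> (\<Sum>j\<in>{Suc k..Suc k + K}. (1 / 2) ^ j)"
    by (intro sum_mono2) auto
  also have "\<dots> \<le> (1 / 2) ^ k"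
    by (simp only: sum_gp) (simp add: field_simps)
  finally show ?thesis .
qed

locale spreading =
  fixes n :: nat and E :: "nat \<Rightarrow> nat \<Rightarrow> complex" and supp :: "nat \<Rightarrow> nat"
  assumes n: "2 \<le> n"
    and E_support: "\<And>j i. supp j \<le> i \<Longrightarrow> E j i = 0"
    and E_sum: "\<And>j. (\<Sum>i<supp j. E j i) = 0"
begin

definition energy :: "nat \<Rightarrow> real" where
  "energy j = (l2_norm (E j))\<^sup>2"

(* For j < k the levels give N k = N j * n ^ d with n ^ d >= supp j, so the block sum over N k
   maps spread j to a block sum of E j over blocks longer than its support, which vanishes;
   they also make the spreads beyond k small compared with 1 / sqrt (N k). *)
primrec level :: "nat \<Rightarrow> nat" where
  "level 0 = 0"
| "level (Suc j) = level j + supp j + Suc j + nat \<lceil>energy (Suc j) * 4 ^ Suc j * n ^ level j\<rceil>"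

definition N :: "nat \<Rightarrow> nat" where
  "N j = n ^ level j"

(* Leaving the positions below j of each block empty makes spread j vanish on [0, j), so the
   finite sum defining universal_vector i is the sum of all spreads at i. *)
definition spread :: "nat \<Rightarrow> nat \<Rightarrow> complex" where
  "spread j i = (if j \<le> i mod N j then E j (i div N j) / of_nat (N j - j) else 0)"

definition tail :: "nat \<Rightarrow> nat \<Rightarrow> complex" where
  "tail k i = (\<Sum>j\<in>{k<..i}. spread j i)"

definition universal_vector :: "nat \<Rightarrow> complex" where
  "universal_vector i = (\<Sum>j\<le>i. spread j i)"

lemma E_square_summable: "square_summable (E j)"
  using E_support by (rule square_summable_finite_support)

lemma level_ge: "j \<le> level j"
  by (induction j) auto

lemma level_mono: "j \<le> k \<Longrightarrow> level j \<le> level k"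
  by (rule lift_Suc_mono_le[of level]) auto

lemma N_gt: "j < N j"
  using level_ge[of j] power_gt_expt[of n "level j"] n by (simp add: N_def)

lemma spread_block:
  assumes "r < N j"
  shows "spread j (q * N j + r) = (if j \<le> r then E j q / of_nat (N j - j) else 0)"
  using assms by (simp add: spread_def)

lemma spread_eq_0: "i < j \<Longrightarrow> spread j i = 0"
  unfolding spread_def by (meson mod_less_eq_dividend order_trans not_le)

lemma block_sum_spread: "block_sum (N j) (spread j) = E j"
proof
  fix q
  have "block_sum (N j) (spread j) q = (\<Sum>r\<in>{j..<N j}. E j q / of_nat (N j - j))"
    unfolding block_sum_eq by (rule sum.mono_neutral_cong_right) (auto simp: spread_block)
  also have "\<dots> = E j q"
    using N_gt[of j] by simp
  finally show "block_sum (N j) (spread j) q = E j q" .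
qed

lemma block_sum_spread_eq_0:
  assumes "j < k"
  shows "block_sum (N k) (spread j) q = 0"
proof -
  define d where "d = level k - level j"
  have "level (Suc j) \<le> level k"
    using assms by (intro level_mono) simp
  then have d: "supp j \<le> d" and "N k = N j * n ^ d"
    by (auto simp: d_def N_def simp flip: power_add)
  then have "block_sum (N k) (spread j) = block_sum (n ^ d) (E j)"
    by (simp add: block_sum_block_sum[symmetric] block_sum_spread)
  moreover have "supp j \<le> n ^ d"
    using d power_gt_expt[of n d] n by simp
  ultimately show ?thesis
    using E_support E_sum block_sum_eq_0 by metis
qed

lemma spread_l2_norm:
  shows "square_summable (spread j)" and "(l2_norm (spread j))\<^sup>2 \<le> energy j / (N j - j)"
proof -
  have "(\<Sum>i<K. (cmod (spread j i))\<^sup>2) \<le> energy j / (N j - j)" for K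
  proof -
    have "(\<Sum>i<K. (cmod (spread j i))\<^sup>2) \<le> (\<Sum>i<K * N j. (cmod (spread j i))\<^sup>2)"
      using N_gt[of j] by (intro sum_mono2) auto
    also have "\<dots> = (\<Sum>q<K. \<Sum>r<N j. (cmod (spread j (q * N j + r)))\<^sup>2)"
      by (simp flip: sum.nat_group add: sum_atLeastLessThan_add)
    also have "\<dots> = (\<Sum>q<K. (cmod (E j q))\<^sup>2 / (N j - j))"
    proof (rule sum.cong[OF refl])
      fix q
      have "(\<Sum>r<N j. (cmod (spread j (q * N j + r)))\<^sup>2) = (\<Sum>r\<in>{j..<N j}. (cmod (E j q) / (N j - j))\<^sup>2)"
        by (rule sum.mono_neutral_cong_right) (auto simp: spread_block norm_divide simp del: of_nat_diff)
      then show "(\<Sum>r<N j. (cmod (spread j (q * N j + r)))\<^sup>2) = (cmod (E j q))\<^sup>2 / (N j - j)"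
        using N_gt[of j] by (simp add: power2_eq_square)
    qed
    also have "\<dots> = (\<Sum>q<K. (cmod (E j q))\<^sup>2) / (N j - j)"
      by (rule sum_divide_distrib[symmetric])
    also have "\<dots> \<le> energy j / (N j - j)"
      using sum_le_l2_norm_square[OF E_square_summable] N_gt[of j]
      by (simp add: energy_def divide_right_mono)
    finally show ?thesis .
  qed
  then show "square_summable (spread j)" and "(l2_norm (spread j))\<^sup>2 \<le> energy j / (N j - j)"
    by (rule square_summable_boundI)+
qed

lemma spread_small:
  assumes "k < j"
  shows "sqrt (N k) * l2_norm (spread j) \<le> (1 / 2) ^ j"
proof -
  obtain i where j: "j = Suc i" and "k \<le> i"
    using assms by (metis less_Suc_eq_le less_imp_Suc_add)
  have "N k \<le> N i"
    using \<open>k \<le> i\<close> n by (simp add: N_def level_mono power_increasing)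
  have "energy j * 4 ^ j * N i \<le> real (level j) - j"
    using real_nat_ceiling_ge[of "energy j * 4 ^ j * N i"] by (simp add: j N_def)
  also have "\<dots> \<le> real (N j - j)"
    using power_gt_expt[of n "level j"] n N_gt[of j] by (simp add: N_def of_nat_diff)
  finally have level_bound: "energy j * 4 ^ j * N i \<le> real (N j - j)" .
  have "4 ^ j * (N k * energy j) \<le> 4 ^ j * (N i * energy j)"
    using \<open>N k \<le> N i\<close> by (intro mult_left_mono mult_right_mono) (simp_all add: energy_def)
  also have "\<dots> \<le> real (N j - j)"
    using level_bound by (simp add: mult_ac)
  finally have "N k * energy j \<le> (1 / 4) ^ j * (N j - j)"
    by (simp add: field_simps)
  then have "N k * (energy j / (N j - j)) \<le> (1 / 4) ^ j"
    using N_gt[of j] by (simp add: pos_divide_le_eq)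
  moreover have "N k * (l2_norm (spread j))\<^sup>2 \<le> N k * (energy j / (N j - j))"
    using spread_l2_norm(2) by (rule mult_left_mono) simp
  moreover have "((1 / 2) ^ j)\<^sup>2 = (1 / 4 :: real) ^ j"
    by (simp add: power2_eq_square power_mult_distrib[symmetric])
  ultimately have "(sqrt (N k) * l2_norm (spread j))\<^sup>2 \<le> ((1 / 2) ^ j)\<^sup>2"
    by (simp add: power_mult_distrib)
  then show ?thesis
    by (rule power2_le_imp_le) simp
qed

lemma tail_l2_norm:
  shows "square_summable (tail k)" and "sqrt (N k) * l2_norm (tail k) \<le> (1 / 2) ^ k"
proof -
  have Nk: "0 < sqrt (N k)"
    using N_gt[of k] by simp
  have "L2_set (\<lambda>i. cmod (tail k i)) {..<K} \<le> (1 / 2) ^ k / sqrt (N k)" for K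
  proof -
    have "tail k i = (\<Sum>j\<in>{k<..<K}. spread j i)" if "i < K" for i
      unfolding tail_def using that by (intro sum.mono_neutral_left) (auto simp: spread_eq_0)
    then have "L2_set (\<lambda>i. cmod (tail k i)) {..<K} = L2_set (\<lambda>i. cmod (\<Sum>j\<in>{k<..<K}. spread j i)) {..<K}"
      by (intro L2_set_cong) auto
    also have "\<dots> \<le> (\<Sum>j\<in>{k<..<K}. L2_set (\<lambda>i. cmod (spread j i)) {..<K})"
      by (rule L2_set_sum_le) simp
    also have "\<dots> \<le> (\<Sum>j\<in>{k<..<K}. (1 / 2) ^ j / sqrt (N k))"
    proof (rule sum_mono)
      fix j
      assume "j \<in> {k<..<K}"
      then have "sqrt (N k) * l2_norm (spread j) \<le> (1 / 2) ^ j"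
        by (intro spread_small) simp
      then have "l2_norm (spread j) \<le> (1 / 2) ^ j / sqrt (N k)"
        using Nk by (simp add: le_divide_eq mult.commute)
      then show "L2_set (\<lambda>i. cmod (spread j i)) {..<K} \<le> (1 / 2) ^ j / sqrt (N k)"
        using L2_set_le_l2_norm[OF spread_l2_norm(1), of j K] by linarith
    qed
    also have "\<dots> \<le> (1 / 2) ^ k / sqrt (N k)"
      unfolding sum_divide_distrib[symmetric] by (rule divide_right_mono[OF geometric_tail_le]) (use Nk in simp)
    finally show ?thesis .
  qed
  then have "square_summable (tail k)" and "l2_norm (tail k) \<le> (1 / 2) ^ k / sqrt (N k)"
    by (rule square_summable_L2_boundI)+
  then show "square_summable (tail k)" and "sqrt (N k) * l2_norm (tail k) \<le> (1 / 2) ^ k"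
    using Nk by (simp_all add: pos_le_divide_eq mult.commute)
qed

lemma universal_vector_split: "universal_vector i = (\<Sum>j\<le>k. spread j i) + tail k i"
proof (cases "i \<le> k")
  case True
  have "universal_vector i = (\<Sum>j\<le>k. spread j i)"
    unfolding universal_vector_def using True by (intro sum.mono_neutral_left) (auto simp: spread_eq_0)
  then show ?thesis
    using True by (simp add: tail_def)
next
  case False
  then have "{..i} = {..k} \<union> {k<..i}"
    by auto
  moreover have "(\<Sum>j\<in>{..k} \<union> {k<..i}. spread j i) = (\<Sum>j\<le>k. spread j i) + (\<Sum>j\<in>{k<..i}. spread j i)"
    by (rule sum.union_disjoint) auto
  ultimately show ?thesis
    unfolding universal_vector_def tail_def by simp
qed

lemma universal_vector_square_summable: "square_summable universal_vector"
proof -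
  have "universal_vector = (\<lambda>i. spread 0 i + tail 0 i)"
    using universal_vector_split[of _ 0] by auto
  then show ?thesis
    using l2_norm_add(1)[OF spread_l2_norm(1) tail_l2_norm(1)] by simp
qed

lemma block_sum_universal_vector: "block_sum (N k) universal_vector q = E k q + block_sum (N k) (tail k) q"
proof -
  have "universal_vector = (\<lambda>i. (\<Sum>j\<le>k. spread j i) + tail k i)"
    using universal_vector_split by auto
  then have "block_sum (N k) universal_vector q = (\<Sum>j\<le>k. block_sum (N k) (spread j) q) + block_sum (N k) (tail k) q"
    by (simp add: block_sum_add block_sum_sum)
  also have "(\<Sum>j\<le>k. block_sum (N k) (spread j) q) = E k q"
    by (simp add: lessThan_Suc_atMost[symmetric] block_sum_spread block_sum_spread_eq_0)
  finally show ?thesis .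
qed

lemma universal_vector_approx: "l2_dist (block_sum (N k) universal_vector) (E k) \<le> (1 / 2) ^ k"
proof -
  have "l2_dist (block_sum (N k) universal_vector) (E k) = l2_norm (block_sum (N k) (tail k))"
    by (simp add: l2_dist_def block_sum_universal_vector)
  also have "\<dots> \<le> sqrt (N k) * l2_norm (tail k)"
    by (rule block_sum_l2_norm(2)[OF tail_l2_norm(1)])
  also have "\<dots> \<le> (1 / 2) ^ k"
    by (rule tail_l2_norm(2))
  finally show ?thesis .
qed

end

lemma block_sum_hypercyclic:
  assumes n: "2 \<le> n"
  shows "\<exists>x. square_summable x \<and>
    (\<forall>c e. square_summable c \<longrightarrow> 0 < e \<longrightarrow> (\<exists>m. l2_dist (block_sum (n ^ m) x) c < e))"
proof -
  \<comment> \<open>through prod_decode every balanced sequence recurs at arbitrarily large indices\<close>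
  define E where "E j = balanced_rat_seq 0 (from_nat (fst (prod_decode j)))" for j
  define supp where "supp j = balanced_support (from_nat (fst (prod_decode j)))" for j
  interpret spreading n E supp
    using n balanced_rat_seq_support balanced_rat_seq_sum[of 0]
    by unfold_locales (simp_all add: E_def supp_def atLeast0LessThan)
  show ?thesis
  proof (intro exI[of _ universal_vector] conjI allI impI)
    show "square_summable universal_vector"
      by (rule universal_vector_square_summable)
    fix c :: "nat \<Rightarrow> complex" and e :: real
    assume c: "square_summable c" and e: "0 < e"
    obtain K where K: "(1 / 2 :: real) ^ K < e / 2"
      using real_arch_pow_inv[of "e / 2" "1 / 2"] e by auto
    obtain \<pi> where \<pi>: "l2_dist (balanced_rat_seq 0 \<pi>) c < e / 2"
      using balanced_rat_seq_dense[OF c, where e = "e / 2" and a = 0] e by auto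
    define j where "j = prod_encode (to_nat \<pi>, K)"
    have "(1 / 2 :: real) ^ j \<le> (1 / 2) ^ K"
      using le_prod_encode_2[of K "to_nat \<pi>"] by (simp add: j_def power_decreasing)
    then have "l2_dist (block_sum (N j) universal_vector) (E j) < e / 2"
      using universal_vector_approx[of j] K by linarith
    moreover have "l2_dist (E j) c < e / 2"
      using \<pi> by (simp add: E_def j_def)
    moreover have "l2_dist (block_sum (N j) universal_vector) c
        \<le> l2_dist (block_sum (N j) universal_vector) (E j) + l2_dist (E j) c"
      using block_sum_l2_norm(1)[OF universal_vector_square_summable] E_square_summable c
      by (rule l2_dist_triangle)
    ultimately have "l2_dist (block_sum (n ^ level j) universal_vector) c < e"
      unfolding N_def by linarith
    then show "\<exists>m. l2_dist (block_sum (n ^ m) universal_vector) c < e" ..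
  qed
qed

section \<open>Transfer to the Hardy space\<close>

lemma h2_hypercyclic_W_adj:
  assumes n: "2 \<le> n"
  shows "h2_hypercyclic (W_adj n)"
proof -
  obtain x where x: "square_summable x"
    and dense: "\<And>c e. square_summable c \<Longrightarrow> 0 < e \<Longrightarrow> \<exists>m. l2_dist (block_sum (n ^ m) x) c < e"
    using block_sum_hypercyclic[OF n] by blast
  have f: "h2_of_coeffs x \<in> H2" "h2coeff (h2_of_coeffs x) = x"
    using h2_of_coeffs_in_H2[OF x] by auto
  have orbit: "(W_adj n ^^ m) (h2_of_coeffs x) = h2_of_coeffs (block_sum (n ^ m) x)" for m
    using W_adj_power[OF _ f(1)] n f(2) by simp
  have "h2_dense {(W_adj n ^^ m) (h2_of_coeffs x) | m. True}"
    unfolding h2_dense_def orbit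
  proof (intro conjI ballI allI impI)
    show "{h2_of_coeffs (block_sum (n ^ m) x) | m. True} \<subseteq> H2"
      using h2_of_coeffs_in_H2(1)[OF block_sum_l2_norm(1)[OF x]] by auto
    fix g e
    assume "g \<in> H2" "0 < (e::real)"
    then obtain m where "l2_dist (block_sum (n ^ m) x) (h2coeff g) < e"
      using dense[OF square_summable_h2coeff] by blast
    then show "\<exists>f\<in>{h2_of_coeffs (block_sum (n ^ m) x) | m. True}. h2dist f g < e"
      using h2dist_h2_of_coeffs[OF block_sum_l2_norm(1)[OF x]] by auto
  qed
  then show ?thesis
    unfolding h2_hypercyclic_def using f(1) by blast
qed

lemma h2_dense_periodic_points_W_adj:
  assumes n: "2 \<le> n"
  shows "h2_dense (h2_periodic_points (W_adj n))"
  unfolding h2_dense_def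
proof (intro conjI ballI allI impI)
  show "h2_periodic_points (W_adj n) \<subseteq> H2"
    by (auto simp: h2_periodic_points_def)
  fix g e
  assume g: "g \<in> H2" and e: "0 < (e::real)"
  obtain x p where x: "0 < p" "square_summable x" "block_sum (n ^ p) x = x" "l2_dist x (h2coeff g) < e"
    using block_sum_periodic_approx[OF n square_summable_h2coeff[OF g] e] by blast
  have f: "h2_of_coeffs x \<in> H2" "h2coeff (h2_of_coeffs x) = x"
    using h2_of_coeffs_in_H2[OF x(2)] by auto
  have "(W_adj n ^^ p) (h2_of_coeffs x) = h2_of_coeffs x"
    using W_adj_power[OF _ f(1)] n f(2) x(3) by simp
  then have "h2_of_coeffs x \<in> h2_periodic_points (W_adj n)"
    unfolding h2_periodic_points_def using f(1) x(1) by (auto intro!: exI[of _ p])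
  then show "\<exists>f\<in>h2_periodic_points (W_adj n). h2dist f g < e"
    using x(4) by (intro bexI[of _ "h2_of_coeffs x"]) (simp_all add: h2dist_h2_of_coeffs[OF x(2)])
qed

theorem mainTheorem2:
  fixes n :: nat
  assumes "n \<ge> 2"
  shows "h2_devaney_chaotic (W_adj n)"
  unfolding h2_devaney_chaotic_def
  using h2_hypercyclic_W_adj h2_dense_periodic_points_W_adj assms by blast

end
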